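(* Let $X$ be a G-space and suppose there exists a hypercyclic operator $T_0\in L(X)$. Then every $A\in\Sigma(X)$ is an orbit, i.e. there exist $T\in L(X)$ and $x\in X$ with $A=O(T,x)=\{T^nx:n\in\mathbb{Z}_+\}$.
   Context: All topological vector spaces are Hausdorff, over $\mathbb{K}\in\{\mathbb{R},\mathbb{C}\}$. For a topological vector space $X$, $L(X)$ is the algebra of continuous linear operators on $X$ and $GL(X)$ is the group of invertible $T\in L(X)$ with $T^{-1}\in L(X)$. "Countable" means infinite countable. $\Sigma(X)$ denotes the set of all countable dense linearly independent subsets of $X$. $T\in L(X)$ is hypercyclic if there is $x\in X$ (a hypercyclic vector) whose orbit $O(T,x)=\{T^nx:n\in\mathbb{Z}_+\}$ is dense in $X$. A locally convex space $X$ is a G-space if $\Sigma(X)\neq\varnothing$ and $GL(X)$ acts transitively on $\Sigma(X)$ (i.e. for all $A,B\in\Sigma(X)$ there is $J\in GL(X)$ with $J(A)=B$). A subset $A\subseteq X$ is called an orbit if $A=O(T,x)$ for some $T\in L(X)$, $x\in X$. *)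

theory Defs
  imports "HOL-Analysis.Analysis"
begin

definition tvs :: "('k::real_normed_field \<Rightarrow> 'a::{ab_group_add,t2_space} \<Rightarrow> 'a) \<Rightarrow> bool" where
  "tvs smult_op \<longleftrightarrow> vector_space smult_op
     \<and> continuous_on UNIV (\<lambda>p::'a \<times> 'a. fst p + snd p)
     \<and> continuous_on UNIV (\<lambda>p::'k \<times> 'a. smult_op (fst p) (snd p))"

definition convex_set :: "('k::real_normed_field \<Rightarrow> 'a::ab_group_add \<Rightarrow> 'a) \<Rightarrow> 'a set \<Rightarrow> bool" where
  "convex_set smult_op V \<longleftrightarrow> (\<forall>x\<in>V. \<forall>y\<in>V. \<forall>t::real. 0 \<le> t \<and> t \<le> 1 \<longrightarrow>
      smult_op (of_real t) x + smult_op (of_real (1 - t)) y \<in> V)"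

definition locally_convex :: "('k::real_normed_field \<Rightarrow> 'a::{ab_group_add,t2_space} \<Rightarrow> 'a) \<Rightarrow> bool" where
  "locally_convex smult_op \<longleftrightarrow> tvs smult_op \<and>
     (\<forall>U. open U \<and> 0 \<in> U \<longrightarrow> (\<exists>V. open V \<and> 0 \<in> V \<and> V \<subseteq> U \<and> convex_set smult_op V))"

definition cont_ops :: "('k::real_normed_field \<Rightarrow> 'a::{ab_group_add,t2_space} \<Rightarrow> 'a) \<Rightarrow> ('a \<Rightarrow> 'a) set" where
  "cont_ops smult_op = {T. Vector_Spaces.linear smult_op smult_op T \<and> continuous_on UNIV T}"

definition inv_ops :: "('k::real_normed_field \<Rightarrow> 'a::{ab_group_add,t2_space} \<Rightarrow> 'a) \<Rightarrow> ('a \<Rightarrow> 'a) set" where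
  "inv_ops smult_op = {T. T \<in> cont_ops smult_op \<and> bij T \<and> inv T \<in> cont_ops smult_op}"

definition Sigma_set :: "('k::real_normed_field \<Rightarrow> 'a::{ab_group_add,t2_space} \<Rightarrow> 'a) \<Rightarrow> 'a set set" where
  "Sigma_set smult_op = {A. countable A \<and> infinite A \<and> closure A = UNIV \<and> \<not> module.dependent smult_op A}"

definition G_space :: "('k::real_normed_field \<Rightarrow> 'a::{ab_group_add,t2_space} \<Rightarrow> 'a) \<Rightarrow> bool" where
  "G_space smult_op \<longleftrightarrow> locally_convex smult_op \<and> Sigma_set smult_op \<noteq> {} \<and>
     (\<forall>A\<in>Sigma_set smult_op. \<forall>B\<in>Sigma_set smult_op. \<exists>J\<in>inv_ops smult_op. J ` A = B)"

definition orbit :: "('a \<Rightarrow> 'a) \<Rightarrow> 'a \<Rightarrow> 'a set" where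
  "orbit T x = range (\<lambda>n::nat. (T ^^ n) x)"

definition hypercyclic :: "('a::topological_space \<Rightarrow> 'a) \<Rightarrow> bool" where
  "hypercyclic T \<longleftrightarrow> (\<exists>x. closure (orbit T x) = UNIV)"

end

theory Submission
  imports Defs "HOL-Computational_Algebra.Fundamental_Theorem_Algebra"
begin

(*
  Take a hypercyclic T0 with a hypercyclic vector x.
  The orbit O(T0,x) is countable and dense; it is also linearly independent, for otherwise
  some T0^m x lies in the span V of the earlier iterates, V is T0-invariant, so the orbit
  and hence (V being closed) all of X lies in the finite-dimensional space V, contradicting
  the existence of an infinite independent set in Sigma(X).  Hence O(T0,x) is in Sigma(X);
  transitivity of GL(X) on Sigma(X) gives J with J(O(T0,x)) = A, and A is the orbit of J x
  under the continuous operator J o T0 o J^-1.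

  The only non-trivial analytic ingredient is that finite-dimensional subspaces of a
  Hausdorff TVS are closed.  This needs the scalar field to be locally compact.  Here the
  scalars form an arbitrary real normed field, so the file first proves Mazur's theorem
  (every element of a real normed field is a root of a real quadratic x^2 - 2 Re w x + |w|^2),
  deduces that such a field is R or R + R i with |a| + |b| <= 2 |a + b i|, hence that its
  closed balls are compact, and then shows by induction on a spanning set that finite
  spans are closed.
*)

section \<open>Real polynomials evaluated in a real algebra\<close>

lemma map_poly_of_real_mult:
  "map_poly (of_real :: real \<Rightarrow> 'k::{real_algebra_1,comm_ring_1}) (p * q) =
     map_poly of_real p * map_poly of_real q"
  by (intro poly_eqI) (simp add: coeff_map_poly coeff_mult)

lemma map_poly_of_real_prod:
  "map_poly (of_real :: real \<Rightarrow> 'k::{real_algebra_1,comm_ring_1}) (\<Prod>i\<in>A. p i) =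
     (\<Prod>i\<in>A. map_poly of_real (p i))"
  by (induction A rule: infinite_finite_induct) (auto simp: map_poly_of_real_mult)

lemma map_poly_of_real_power:
  "map_poly (of_real :: real \<Rightarrow> 'k::{real_algebra_1,comm_ring_1}) (p ^ n) = (map_poly of_real p) ^ n"
  by (induction n) (auto simp: map_poly_of_real_mult)

lemma map_poly_of_real_add:
  "map_poly (of_real :: real \<Rightarrow> 'k::{real_algebra_1,comm_ring_1}) (p + q) =
     map_poly of_real p + map_poly of_real q"
  by (intro poly_eqI) (simp add: coeff_map_poly)

lemma map_poly_of_real_inj:
  "map_poly (of_real :: real \<Rightarrow> 'k::{real_algebra_1,comm_ring_1}) p = map_poly of_real q \<Longrightarrow> p = q"
  by (intro poly_eqI) (metis coeff_map_poly of_real_0 of_real_eq_iff)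

text \<open>The monic real quadratic whose complex roots are w and its conjugate, and its value
  q_w(\<xi>) at an element \<xi> of a real algebra.\<close>

definition conj_pair_rpoly :: "complex \<Rightarrow> real poly" where
  "conj_pair_rpoly w = [:(cmod w)\<^sup>2, -2 * Re w, 1:]"

definition conj_pair_poly :: "complex \<Rightarrow> 'k::real_algebra_1 \<Rightarrow> 'k" where
  "conj_pair_poly w \<xi> = \<xi> * \<xi> - of_real (2 * Re w) * \<xi> + of_real ((cmod w)\<^sup>2)"

lemma poly_conj_pair_rpoly:
  "poly (map_poly of_real (conj_pair_rpoly w)) (\<xi> :: 'k::{real_algebra_1,comm_ring_1}) =
     conj_pair_poly w \<xi>"
  by (simp add: conj_pair_rpoly_def conj_pair_poly_def map_poly_pCons algebra_simps)

lemma conj_pair_poly_complex: "conj_pair_poly w z = (z - w) * (z - cnj w)"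
proof -
  have "(z - w) * (z - cnj w) = z * z - (w + cnj w) * z + w * cnj w"
    by (simp add: algebra_simps)
  then show ?thesis
    by (simp add: conj_pair_poly_def complex_add_cnj complex_mult_cnj cmod_power2
        flip: of_real_power of_real_add)
qed

text \<open>A monic real polynomial G splits over C as a product of linear factors; pairing each
  factor with its conjugate shows that G(\<xi>)^2 is a product of conjugate-pair quadratics
  evaluated at \<xi>, for \<xi> in any real algebra.\<close>

lemma square_monic_real_poly_factors:
  fixes \<xi> :: "'k::{real_algebra_1,comm_ring_1}" and G :: "real poly"
  assumes monic: "lead_coeff G = 1"
  shows "\<exists>r::nat \<Rightarrow> complex. poly (map_poly of_real G) = (\<lambda>z. \<Prod>i<degree G. z - r i) \<and>
           (poly (map_poly of_real G) \<xi>)\<^sup>2 = (\<Prod>i<degree G. conj_pair_poly (r i) \<xi>)"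
proof -
  define Gc where "Gc = (map_poly of_real G :: complex poly)"
  have deg: "degree Gc = degree G" unfolding Gc_def by (rule degree_map_poly) auto
  obtain r where "smult (lead_coeff Gc) (\<Prod>i<degree Gc. [:-r i, 1:]) = Gc"
    using complex_poly_decompose' by blast
  moreover have "lead_coeff Gc = 1" using monic deg unfolding Gc_def by (simp add: coeff_map_poly)
  ultimately have "Gc = (\<Prod>i<degree G. [:-r i, 1:])" using deg by simp
  then have roots: "poly Gc z = (\<Prod>i<degree G. z - r i)" for z
    by (simp add: poly_prod)
  have roots_cnj: "(\<Prod>i<degree G. z - cnj (r i)) = poly Gc z" for z
  proof -
    have "(\<Prod>i<degree G. z - cnj (r i)) = cnj (poly Gc (cnj z))"
      by (simp add: roots)
    also have "\<dots> = poly Gc z"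
      using poly_cnj_real[of Gc "cnj z"] by (simp add: Gc_def coeff_map_poly)
    finally show ?thesis .
  qed
  have square: "G * G = (\<Prod>i<degree G. conj_pair_rpoly (r i))"
  proof (rule map_poly_of_real_inj[where 'k = complex], rule poly_eq_poly_eq_iff[THEN iffD1], rule ext)
    fix z
    have "poly (map_poly of_real (\<Prod>i<degree G. conj_pair_rpoly (r i))) z =
          (\<Prod>i<degree G. (z - r i) * (z - cnj (r i)))"
      by (simp add: map_poly_of_real_prod poly_prod poly_conj_pair_rpoly conj_pair_poly_complex)
    also have "\<dots> = poly Gc z * poly Gc z"
      by (simp add: prod.distrib roots roots_cnj)
    finally show "poly (map_poly of_real (G * G)) z =
                  poly (map_poly of_real (\<Prod>i<degree G. conj_pair_rpoly (r i))) z"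
      by (simp add: map_poly_of_real_mult Gc_def)
  qed
  have "(poly (map_poly of_real G) \<xi>)\<^sup>2 = poly (map_poly of_real (\<Prod>i<degree G. conj_pair_rpoly (r i))) \<xi>"
    by (simp add: power2_eq_square map_poly_of_real_mult flip: square)
  also have "\<dots> = (\<Prod>i<degree G. conj_pair_poly (r i) \<xi>)"
    by (simp add: map_poly_of_real_prod poly_prod poly_conj_pair_rpoly)
  finally have "(poly (map_poly of_real G) \<xi>)\<^sup>2 = (\<Prod>i<degree G. conj_pair_poly (r i) \<xi>)" .
  with roots show ?thesis unfolding Gc_def by blast
qed

section \<open>Mazur's theorem: every element of a real normed field is a real quadratic root\<close>

lemma conj_pair_poly_shift:
  assumes "Re z = Re w" and "(cmod z)\<^sup>2 = (cmod w)\<^sup>2 + \<epsilon>"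
  shows "conj_pair_poly z \<xi> = conj_pair_poly w \<xi> + of_real \<epsilon>"
  using assms by (simp add: conj_pair_poly_def)

text \<open>Coercivity: the quadratic grows like |w|^2, so its norm attains a minimum.\<close>

lemma conj_pair_poly_coercive:
  fixes \<xi> :: "'k::real_normed_field"
  shows "(cmod w)\<^sup>2 - 2 * cmod w * norm \<xi> - (norm \<xi>)\<^sup>2 \<le> norm (conj_pair_poly w \<xi>)"
proof -
  have "(cmod w)\<^sup>2 = norm (of_real ((cmod w)\<^sup>2) :: 'k)"
    by (simp only: norm_of_real abs_power2)
  also have "of_real ((cmod w)\<^sup>2) = conj_pair_poly w \<xi> - \<xi> * \<xi> + of_real (2 * Re w) * \<xi>"
    by (simp add: conj_pair_poly_def)
  also have "norm \<dots> \<le> norm (conj_pair_poly w \<xi>) + norm (\<xi> * \<xi>) + norm (of_real (2 * Re w) * \<xi>)"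
    by (rule order_trans[OF norm_triangle_ineq]) (intro add_right_mono norm_triangle_ineq4)
  also have "norm (of_real (2 * Re w) * \<xi>) \<le> 2 * cmod w * norm \<xi>"
    by (simp add: norm_mult abs_Re_le_cmod mult_right_mono)
  finally show ?thesis by (simp add: norm_mult power2_eq_square)
qed

lemma conj_pair_poly_extremal_min:
  fixes \<xi> :: "'k::real_normed_field"
  obtains w0 where "\<And>w. norm (conj_pair_poly w0 \<xi>) \<le> norm (conj_pair_poly w \<xi>)"
    and "\<And>w. norm (conj_pair_poly w \<xi>) = norm (conj_pair_poly w0 \<xi>) \<Longrightarrow> cmod w \<le> cmod w0"
proof -
  define f where "f w = norm (conj_pair_poly w \<xi>)" for w
  have cont: "continuous_on UNIV f" unfolding f_def conj_pair_poly_def by (intro continuous_intros)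
  define R where "R = 3 * norm \<xi> + 1"
  have bounded_sublevel: "cmod w \<le> R" if "f w \<le> f 0" for w
  proof (rule ccontr)
    assume "\<not> cmod w \<le> R"
    then have "cmod w * (cmod w - 2 * norm \<xi>) \<ge> (3 * norm \<xi> + 1) * (norm \<xi> + 1)"
      by (intro mult_mono) (auto simp: R_def)
    then have "(cmod w)\<^sup>2 - 2 * cmod w * norm \<xi> - (norm \<xi>)\<^sup>2 \<ge> 2 * (norm \<xi>)\<^sup>2 + 4 * norm \<xi> + 1"
      by (simp add: power2_eq_square algebra_simps)
    then have "(cmod w)\<^sup>2 - 2 * cmod w * norm \<xi> - (norm \<xi>)\<^sup>2 > (norm \<xi>)\<^sup>2"
      using norm_ge_zero[of \<xi>] zero_le_power2[of "norm \<xi>"] by linarith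
    moreover have "f 0 = (norm \<xi>)\<^sup>2"
      by (simp add: f_def conj_pair_poly_def norm_mult power2_eq_square)
    ultimately show False using conj_pair_poly_coercive[of w \<xi>] that by (simp add: f_def)
  qed
  define K where "K = {w. f w \<le> f 0}"
  have "compact K"
    unfolding compact_eq_bounded_closed bounded_iff K_def
    using bounded_sublevel closed_Collect_le[OF cont] by auto
  then obtain wm where wm: "wm \<in> K" "\<And>w. w \<in> K \<Longrightarrow> f wm \<le> f w"
    using continuous_attains_inf[OF _ _ continuous_on_subset[OF cont]] K_def by force
  have min: "f wm \<le> f w" for w
    using wm unfolding K_def by (cases "f w \<le> f 0") force+
  define S where "S = {w. f w = f wm}"
  have "S \<subseteq> K" unfolding S_def K_def using min[of 0] by auto
  moreover have "closed S" unfolding S_def by (rule closed_Collect_eq[OF cont]) auto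
  ultimately have "compact S" using compact_Int_closed[OF \<open>compact K\<close>] by (metis Int_absorb1)
  moreover have "wm \<in> S" unfolding S_def by simp
  ultimately obtain w0 where "w0 \<in> S" and w0: "\<And>w. w \<in> S \<Longrightarrow> cmod w \<le> cmod w0"
    using continuous_attains_sup[OF _ _ continuous_on_norm_id[of S]] by auto
  then have "f w0 = f wm" by (simp add: S_def)
  show ?thesis
  proof (rule that)
    show "norm (conj_pair_poly w0 \<xi>) \<le> norm (conj_pair_poly w \<xi>)" for w
      using min[of w] \<open>f w0 = f wm\<close> by (simp add: f_def)
    show "cmod w \<le> cmod w0" if "norm (conj_pair_poly w \<xi>) = norm (conj_pair_poly w0 \<xi>)" for w
      using w0[of w] that \<open>f w0 = f wm\<close> by (simp add: S_def f_def)
  qed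
qed

text \<open>Let w0 minimise |q_w(\<xi>)| with minimum m > 0 and let z be w0 shifted
  by \<epsilon>.  The real polynomial G = h^n - (-\<epsilon>)^n, h = q_w0, vanishes at z, so
  |G(\<xi>)|^2 = \<Prod> |q_{r_i}(\<xi>)| \<ge> |q_z(\<xi>)| m^(2n-1), while |G(\<xi>)| \<le> m^n + \<epsilon>^n.\<close>

lemma conj_pair_poly_power_bound:
  fixes \<xi> :: "'k::real_normed_field"
  assumes min: "\<And>w. m \<le> norm (conj_pair_poly w \<xi>)"
    and w0: "norm (conj_pair_poly w0 \<xi>) = m" and m: "m > 0"
    and z: "Re z = Re w0" "(cmod z)\<^sup>2 = (cmod w0)\<^sup>2 + \<epsilon>" and \<epsilon>: "\<epsilon> > 0"
    and n: "n \<ge> 1"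
  shows "norm (conj_pair_poly z \<xi>) \<le> m * (1 + (\<epsilon> / m) ^ n)\<^sup>2"
proof -
  define h where "h = conj_pair_rpoly w0"
  define G where "G = h ^ n + [:- ((- \<epsilon>) ^ n):]"
  have h: "degree h = 2" "lead_coeff h = 1" by (simp_all add: h_def conj_pair_rpoly_def)
  then have "h \<noteq> 0" by auto
  with h have hn: "degree (h ^ n) = 2 * n" "lead_coeff (h ^ n) = 1"
    by (simp add: degree_power_eq) (metis h(2) lead_coeff_power power_one)
  then have deg: "degree G = 2 * n" unfolding G_def using n by (subst degree_add_eq_left) auto
  have "lead_coeff G = 1" unfolding deg using hn n by (simp add: G_def coeff_pCons split: nat.splits)
  then obtain r where roots: "poly (map_poly of_real G) = (\<lambda>z. \<Prod>i<degree G. z - r i)"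
    and square: "(poly (map_poly of_real G) \<xi>)\<^sup>2 = (\<Prod>i<degree G. conj_pair_poly (r i) \<xi>)"
    using square_monic_real_poly_factors by blast
  have "conj_pair_poly w0 z = - of_real \<epsilon>"
    using conj_pair_poly_shift[OF z, of z] by (simp add: conj_pair_poly_complex eq_neg_iff_add_eq_0)
  then have "poly (map_poly of_real h) z = - of_real \<epsilon>"
    by (simp add: h_def poly_conj_pair_rpoly)
  then have "poly (map_poly of_real G) z = 0"
    by (simp add: G_def map_poly_of_real_power map_poly_of_real_add map_poly_pCons)
  then obtain j where j: "j < 2 * n" "r j = z" using roots deg by auto
  have "poly (map_poly of_real G) \<xi> = (conj_pair_poly w0 \<xi>) ^ n - of_real ((- \<epsilon>) ^ n)"
    by (simp add: G_def map_poly_of_real_power map_poly_of_real_add map_poly_pCons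
        h_def poly_conj_pair_rpoly)
  then have upper: "norm (poly (map_poly of_real G) \<xi>) \<le> m ^ n + \<epsilon> ^ n"
    using norm_triangle_ineq4[of "(conj_pair_poly w0 \<xi>) ^ n" "of_real ((- \<epsilon>) ^ n) :: 'k"] w0 \<epsilon>
    by (simp add: norm_power power_abs)
  define f where "f i = norm (conj_pair_poly (r i) \<xi>)" for i
  have "(norm (poly (map_poly of_real G) \<xi>))\<^sup>2 = (\<Prod>i<2 * n. f i)"
    using square deg by (simp add: f_def prod_norm flip: norm_power)
  also have "\<dots> = f j * (\<Prod>i\<in>{..<2 * n} - {j}. f i)"
    using j by (simp add: prod.remove)
  also have "\<dots> \<ge> f j * (\<Prod>i\<in>{..<2 * n} - {j}. m)"
    by (intro mult_left_mono prod_mono) (use m min in \<open>auto simp: f_def\<close>)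
  also have "(\<Prod>i\<in>{..<2 * n} - {j}. m) = m ^ (2 * n - 1)"
    using j by simp
  finally have "norm (conj_pair_poly z \<xi>) * m ^ (2 * n - 1) \<le> (norm (poly (map_poly of_real G) \<xi>))\<^sup>2"
    using j by (simp add: f_def)
  also have "\<dots> \<le> (m ^ n + \<epsilon> ^ n)\<^sup>2"
    using upper by (simp add: power_mono)
  also have "m ^ n + \<epsilon> ^ n = m ^ n * (1 + (\<epsilon> / m) ^ n)"
    using m by (simp add: distrib_left power_divide)
  also have "(m ^ n * (1 + (\<epsilon> / m) ^ n))\<^sup>2 = (m * (1 + (\<epsilon> / m) ^ n)\<^sup>2) * m ^ (2 * n - 1)"
  proof -
    have "m * m ^ (2 * n - 1) = (m ^ n)\<^sup>2"
      using n by (simp add: power2_eq_square mult_2 flip: power_Suc power_add)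
    then show ?thesis by (simp add: power_mult_distrib mult.assoc mult.left_commute)
  qed
  finally show ?thesis
    using m by (auto intro: mult_right_le_imp_le)
qed

text \<open>If q_w(\<xi>) never vanished, let w0 be an extremal minimiser with
  minimum m > 0 and z its shift by m/2.  Maximality of |w0| gives |q_z(\<xi>)| > m, while the
  power estimate bounds it by m (1 + 2^-n)^2 for every n, which tends to m.\<close>

theorem conj_pair_poly_has_root:
  fixes \<xi> :: "'k::real_normed_field"
  shows "\<exists>w. conj_pair_poly w \<xi> = 0"
proof (rule ccontr)
  assume no_root: "\<nexists>w. conj_pair_poly w \<xi> = 0"
  obtain w0 where min: "\<And>w. norm (conj_pair_poly w0 \<xi>) \<le> norm (conj_pair_poly w \<xi>)"
    and extremal: "\<And>w. norm (conj_pair_poly w \<xi>) = norm (conj_pair_poly w0 \<xi>) \<Longrightarrow> cmod w \<le> cmod w0"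
    using conj_pair_poly_extremal_min by blast
  define m where "m = norm (conj_pair_poly w0 \<xi>)"
  have m: "m > 0" using no_root by (auto simp: m_def)
  have min_m: "m \<le> norm (conj_pair_poly w \<xi>)" for w using min by (simp add: m_def)
  define \<epsilon> where "\<epsilon> = m / 2"
  have \<epsilon>: "\<epsilon> > 0" "\<epsilon> / m = 1 / 2" using m by (simp_all add: \<epsilon>_def)
  define z where "z = Complex (Re w0) (sqrt ((Im w0)\<^sup>2 + \<epsilon>))"
  have z: "Re z = Re w0" "(cmod z)\<^sup>2 = (cmod w0)\<^sup>2 + \<epsilon>"
    using \<epsilon> by (simp_all add: z_def cmod_power2)
  then have "(cmod w0)\<^sup>2 < (cmod z)\<^sup>2" using \<epsilon> by simp
  then have "cmod w0 < cmod z" by (rule power_less_imp_less_base) simp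
  then have "norm (conj_pair_poly z \<xi>) \<noteq> m" using extremal[of z] by (auto simp: m_def)
  then have above: "m < norm (conj_pair_poly z \<xi>)" using min_m[of z] by simp
  have "norm (conj_pair_poly z \<xi>) \<le> m * (1 + (1 / 2) ^ n)\<^sup>2" if "n \<ge> 1" for n
    using conj_pair_poly_power_bound[OF min_m m_def[symmetric] m z \<epsilon>(1) that] by (simp add: \<epsilon>(2))
  moreover have "(\<lambda>n. m * (1 + (1 / 2) ^ n)\<^sup>2) \<longlonglongrightarrow> m * (1 + 0)\<^sup>2"
    by (intro tendsto_intros LIMSEQ_realpow_zero) auto
  ultimately have "norm (conj_pair_poly z \<xi>) \<le> m"
    using LIMSEQ_le_const[of "\<lambda>n. m * (1 + (1 / 2) ^ n)\<^sup>2"] by fastforce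
  with above show False by simp
qed

section \<open>Closed balls in a real normed field are compact\<close>

text \<open>Completing the square in Mazur's theorem: every \<eta> satisfies (\<eta> - a)^2 = -b^2 for
  real a and b.\<close>

lemma real_normed_field_square_root_of_negative:
  fixes \<eta> :: "'k::real_normed_field"
  obtains a b :: real where "(\<eta> - of_real a) * (\<eta> - of_real a) = - of_real (b * b)"
proof -
  obtain w where w: "conj_pair_poly w \<eta> = 0" using conj_pair_poly_has_root by blast
  have "(cmod w)\<^sup>2 = Re w * Re w + Im w * Im w"
    using cmod_power2[of w] by (simp only: power2_eq_square)
  then have "(\<eta> - of_real (Re w)) * (\<eta> - of_real (Re w)) =
             conj_pair_poly w \<eta> - of_real (Im w * Im w)"
    by (simp add: conj_pair_poly_def algebra_simps)
  with w show ?thesis using that by auto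
qed

lemma real_normed_field_real_or_complex:
  "(\<forall>\<eta>::'k::real_normed_field. \<eta> \<in> range of_real) \<or>
   (\<exists>i::'k. i * i = -1 \<and> (\<forall>\<eta>. \<exists>a b. \<eta> = of_real a + of_real b * i))"
proof (cases "\<forall>\<eta>::'k. \<eta> \<in> range of_real")
  case False
  then obtain \<eta>0 :: 'k where \<eta>0: "\<eta>0 \<notin> range of_real" by blast
  have unit: "((\<eta> - of_real a) / of_real b) * ((\<eta> - of_real a) / of_real b) = -1"
    if "(\<eta> - of_real a) * (\<eta> - of_real a) = - of_real (b * b)" "b \<noteq> 0" for \<eta> :: 'k and a b
  proof -
    have "((\<eta> - of_real a) / of_real b) * ((\<eta> - of_real a) / of_real b) =
          ((\<eta> - of_real a) * (\<eta> - of_real a)) / of_real (b * b)"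
      by simp
    then show ?thesis using that by simp
  qed
  obtain a0 b0 where ab0: "(\<eta>0 - of_real a0) * (\<eta>0 - of_real a0) = - of_real (b0 * b0)"
    by (rule real_normed_field_square_root_of_negative)
  have "b0 \<noteq> 0"
  proof
    assume "b0 = 0"
    then have "\<eta>0 = of_real a0" using ab0 by simp
    then show False using \<eta>0 by auto
  qed
  define i where "i = (\<eta>0 - of_real a0) / of_real b0"
  have ii: "i * i = -1" unfolding i_def by (rule unit[OF ab0 \<open>b0 \<noteq> 0\<close>])
  have "\<exists>a b. \<eta> = of_real a + of_real b * i" for \<eta> :: 'k
  proof -
    obtain a b where ab: "(\<eta> - of_real a) * (\<eta> - of_real a) = - of_real (b * b)"
      by (rule real_normed_field_square_root_of_negative)
    show ?thesis
    proof (cases "b = 0")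
      case True
      then have "\<eta> = of_real a + of_real 0 * i" using ab by simp
      then show ?thesis by blast
    next
      case False
      define j where "j = (\<eta> - of_real a) / of_real b"
      have "(j - i) * (j + i) = 0"
        using unit[OF ab False] ii by (simp add: j_def algebra_simps)
      then have "j = i \<or> j = - i" by (auto simp: eq_neg_iff_add_eq_0)
      moreover have "\<eta> = of_real a + of_real b * j" using False by (simp add: j_def)
      ultimately have "\<eta> = of_real a + of_real b * i \<or> \<eta> = of_real a + of_real (- b) * i" by auto
      then show ?thesis by blast
    qed
  qed
  with ii show ?thesis by blast
qed simp

lemma norm_coordinates_bound:
  fixes i :: "'k::real_normed_field"
  assumes ii: "i * i = -1"
  shows "\<bar>a\<bar> + \<bar>b\<bar> \<le> 2 * norm (of_real a + of_real b * i :: 'k)"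
proof -
  have "(norm i)\<^sup>2 = 1\<^sup>2"
    using arg_cong[OF ii, of norm] by (simp add: norm_mult power2_eq_square)
  then have ni: "norm i = 1" by (rule power2_eq_imp_eq) auto
  have "(of_real a + of_real b * i) * (of_real a - of_real b * i) =
        of_real a * of_real a - of_real b * of_real b * (i * i :: 'k)"
    by (simp add: algebra_simps)
  also have "\<dots> = of_real (a * a + b * b)" using ii by simp
  finally have "(of_real a + of_real b * i) * (of_real a - of_real b * i) = (of_real (a * a + b * b) :: 'k)" .
  then have "norm (of_real a + of_real b * i :: 'k) * norm (of_real a - of_real b * i :: 'k) =
             \<bar>a * a + b * b\<bar>"
    by (simp only: norm_of_real flip: norm_mult)
  then have "norm (of_real a + of_real b * i :: 'k) * norm (of_real a - of_real b * i :: 'k) = a * a + b * b"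
    by simp
  moreover have "norm (of_real a - of_real b * i :: 'k) \<le> \<bar>a\<bar> + \<bar>b\<bar>"
    using norm_triangle_ineq4[of "of_real a :: 'k" "of_real b * i"] by (simp add: norm_mult ni)
  ultimately have "a * a + b * b \<le> norm (of_real a + of_real b * i :: 'k) * (\<bar>a\<bar> + \<bar>b\<bar>)"
    by (metis mult_left_mono norm_ge_zero mult.commute)
  moreover have "(\<bar>a\<bar> + \<bar>b\<bar>) * (\<bar>a\<bar> + \<bar>b\<bar>) \<le> 2 * (a * a + b * b)"
    using zero_le_square[of "\<bar>a\<bar> - \<bar>b\<bar>"] by (simp add: algebra_simps power2_eq_square)
  ultimately have key: "(\<bar>a\<bar> + \<bar>b\<bar>) * (\<bar>a\<bar> + \<bar>b\<bar>) \<le> (2 * norm (of_real a + of_real b * i :: 'k)) * (\<bar>a\<bar> + \<bar>b\<bar>)"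
    by (simp add: algebra_simps)
  show ?thesis
  proof (cases "\<bar>a\<bar> + \<bar>b\<bar> = 0")
    case False
    then have "\<bar>a\<bar> + \<bar>b\<bar> > 0" by simp
    with key show ?thesis by (rule mult_right_le_imp_le)
  qed (use norm_ge_zero[of "of_real a + of_real b * i :: 'k"] in linarith)
qed

text \<open>Local compactness of the scalar field: a closed ball lies in the continuous image of a
  compact set of real coordinates.\<close>

lemma compact_cball_real_normed_field: "compact (cball (0 :: 'k::real_normed_field) M)"
proof -
  have "\<exists>C. compact C \<and> cball (0 :: 'k) M \<subseteq> C"
    using real_normed_field_real_or_complex[where 'k = 'k]
  proof
    assume real: "\<forall>\<eta>::'k. \<eta> \<in> range of_real"
    have "cball (0 :: 'k) M \<subseteq> of_real ` cball 0 M"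
    proof
      fix x :: 'k assume "x \<in> cball 0 M"
      moreover obtain a where "x = of_real a" using real by blast
      ultimately show "x \<in> of_real ` cball 0 M" by auto
    qed
    moreover have "compact (of_real ` cball (0::real) M :: 'k set)"
      by (intro compact_continuous_image continuous_intros compact_cball)
    ultimately show ?thesis by blast
  next
    assume "\<exists>i::'k. i * i = -1 \<and> (\<forall>\<eta>. \<exists>a b. \<eta> = of_real a + of_real b * i)"
    then obtain i :: 'k where ii: "i * i = -1" and coords: "\<And>\<eta>. \<exists>a b. \<eta> = of_real a + of_real b * i"
      by blast
    define g where "g p = of_real (fst p) + of_real (snd p) * i" for p :: "real \<times> real"
    have "cball (0 :: 'k) M \<subseteq> g ` (cball 0 (2 * M) \<times> cball 0 (2 * M))"
    proof
      fix x :: 'k assume x: "x \<in> cball 0 M"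
      obtain a b where xab: "x = of_real a + of_real b * i" using coords by blast
      have "\<bar>a\<bar> + \<bar>b\<bar> \<le> 2 * M" using norm_coordinates_bound[OF ii, of a b] x xab by auto
      then have "(a, b) \<in> cball 0 (2 * M) \<times> cball 0 (2 * M)" by auto
      then show "x \<in> g ` (cball 0 (2 * M) \<times> cball 0 (2 * M))"
        by (rule rev_image_eqI) (simp add: g_def xab)
    qed
    moreover have "compact (g ` (cball 0 (2 * M) \<times> cball 0 (2 * M)))"
      unfolding g_def by (intro compact_continuous_image continuous_intros compact_Times compact_cball)
    ultimately show ?thesis by blast
  qed
  then show ?thesis by (metis closed_cball compact_Int_closed Int_absorb1)
qed

section \<open>Finite-dimensional subspaces of a topological vector space are closed\<close>

lemma tvs_vector_space: "tvs s \<Longrightarrow> vector_space s"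
  by (simp add: tvs_def)

lemma tvs_tendsto_scale:
  fixes s :: "'k::real_normed_field \<Rightarrow> 'a::{ab_group_add,t2_space} \<Rightarrow> 'a"
  assumes "tvs s" "(f \<longlongrightarrow> a) F" "(g \<longlongrightarrow> b) F"
  shows "((\<lambda>x. s (f x) (g x)) \<longlongrightarrow> s a b) F"
proof -
  have "isCont (\<lambda>p::'k \<times> 'a. s (fst p) (snd p)) (a, b)"
    using assms(1) by (simp add: tvs_def continuous_on_eq_continuous_at)
  from isCont_tendsto_compose[OF this tendsto_Pair[OF assms(2,3)]] show ?thesis by simp
qed

lemma tvs_tendsto_add:
  fixes s :: "'k::real_normed_field \<Rightarrow> 'a::{ab_group_add,t2_space} \<Rightarrow> 'a"
    and f g :: "'b \<Rightarrow> 'a"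
  assumes "tvs s" "(f \<longlongrightarrow> a) F" "(g \<longlongrightarrow> b) F"
  shows "((\<lambda>x. f x + g x) \<longlongrightarrow> a + b) F"
proof -
  have "isCont (\<lambda>p::'a \<times> 'a. fst p + snd p) (a, b)"
    using assms(1) by (simp add: tvs_def continuous_on_eq_continuous_at)
  from isCont_tendsto_compose[OF this tendsto_Pair[OF assms(2,3)]] show ?thesis by simp
qed

lemma tvs_tendsto_diff:
  fixes s :: "'k::real_normed_field \<Rightarrow> 'a::{ab_group_add,t2_space} \<Rightarrow> 'a"
    and f g :: "'b \<Rightarrow> 'a"
  assumes "tvs s" "(f \<longlongrightarrow> a) F" "(g \<longlongrightarrow> b) F"
  shows "((\<lambda>x. f x - g x) \<longlongrightarrow> a - b) F"
proof -
  interpret vector_space s using tvs_vector_space[OF assms(1)] .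
  have minus: "u - v = u + s (-1) v" for u v by simp
  have "((\<lambda>x. f x + s (-1) (g x)) \<longlongrightarrow> a + s (-1) b) F"
    by (intro tvs_tendsto_add[OF assms(1)] tvs_tendsto_scale[OF assms(1)] assms(2,3) tendsto_const)
  then show ?thesis unfolding minus .
qed

text \<open>Bolzano-Weierstrass for scalar-valued functions along a filter: if the function is
  frequently bounded, some proper refinement of the filter makes it converge.\<close>

lemma frequently_bounded_convergent_refinement:
  fixes \<kappa> :: "'b \<Rightarrow> 'k::real_normed_field"
  assumes bounded: "frequently (\<lambda>x. norm (\<kappa> x) \<le> M) F"
  obtains G t where "G \<le> F" "G \<noteq> bot" "(\<kappa> \<longlongrightarrow> t) G"
proof -
  define F' where "F' = inf F (principal {x. norm (\<kappa> x) \<le> M})"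
  have "F' \<noteq> bot"
  proof
    assume "F' = bot"
    then have "eventually (\<lambda>x. \<not> norm (\<kappa> x) \<le> M) F"
      using eventually_False[of F'] unfolding F'_def eventually_inf_principal by simp
    then show False using bounded by (simp add: frequently_def)
  qed
  then have "filtermap \<kappa> F' \<noteq> bot" by (simp add: filtermap_bot_iff)
  moreover have "eventually (\<lambda>k. k \<in> cball 0 M) (filtermap \<kappa> F')"
    unfolding eventually_filtermap F'_def eventually_inf_principal by simp
  ultimately obtain t where t: "inf (nhds t) (filtermap \<kappa> F') \<noteq> bot"
    using compact_cball_real_normed_field[of M, unfolded compact_filter] by blast
  define G where "G = inf F' (filtercomap \<kappa> (nhds t))"
  have "G \<noteq> bot"
  proof
    assume "G = bot"
    then obtain P Q where P: "eventually P F'" and Q: "eventually Q (filtercomap \<kappa> (nhds t))"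
      and PQ: "\<And>x. P x \<Longrightarrow> Q x \<Longrightarrow> False"
      using eventually_False[of G] unfolding G_def eventually_inf by blast
    from Q obtain R where R: "eventually R (nhds t)" "\<And>x. R (\<kappa> x) \<Longrightarrow> Q x"
      unfolding eventually_filtercomap by blast
    have "eventually (\<lambda>y. \<not> R y) (filtermap \<kappa> F')"
      unfolding eventually_filtermap using P by (rule eventually_mono) (use PQ R in blast)
    then have "eventually (\<lambda>y. False) (inf (nhds t) (filtermap \<kappa> F'))"
      unfolding eventually_inf using R(1) by blast
    then show False using t by simp
  qed
  moreover have "G \<le> F" by (simp add: G_def F'_def le_infI1)
  moreover have "(\<kappa> \<longlongrightarrow> t) G"
    by (rule tendsto_mono[OF _ filterlim_filtercomap]) (simp add: G_def)
  ultimately show ?thesis using that by blast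
qed

text \<open>If z is a
  limit of points x = w + \<kappa>(x) e, either the coefficients \<kappa> cluster at some t, and then
  z - t e \<in> W; or \<kappa> \<rightarrow> \<infinity>, and then x/\<kappa>(x) - e \<in> W tends to -e, forcing e \<in> W.\<close>

lemma closed_subspace_insert_line:
  fixes s :: "'k::real_normed_field \<Rightarrow> 'a::{ab_group_add,t2_space} \<Rightarrow> 'a"
  assumes tv: "tvs s" and closed: "closed W" and subspace: "module.subspace s W"
    and e: "e \<notin> W"
  shows "closed {x. \<exists>k. x - s k e \<in> W}"
proof -
  interpret vector_space s using tvs_vector_space[OF tv] .
  define W' where "W' = {x. \<exists>k. x - s k e \<in> W}"
  define \<kappa> where "\<kappa> x = (SOME k. x - s k e \<in> W)" for x
  have \<kappa>: "x - s (\<kappa> x) e \<in> W" if "x \<in> W'" for x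
    using that unfolding W'_def \<kappa>_def by (auto intro: someI_ex)
  have "z \<in> W'" if "z islimpt W'" for z
  proof -
    define F where "F = at z within W'"
    have "F \<noteq> bot" using that by (simp add: F_def trivial_limit_within)
    have in_W: "eventually (\<lambda>x. x - s (\<kappa> x) e \<in> W) F"
      unfolding F_def eventually_at_filter by (simp add: \<kappa>)
    have to_z: "((\<lambda>x. x) \<longlongrightarrow> z) F" unfolding F_def by simp
    show ?thesis
    proof (cases "\<exists>M. frequently (\<lambda>x. norm (\<kappa> x) \<le> M) F")
      case True
      then obtain G t where G: "G \<le> F" "G \<noteq> bot" and "(\<kappa> \<longlongrightarrow> t) G"
        using frequently_bounded_convergent_refinement by metis
      then have "((\<lambda>x. x - s (\<kappa> x) e) \<longlongrightarrow> z - s t e) G"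
        by (intro tvs_tendsto_diff[OF tv] tvs_tendsto_scale[OF tv] tendsto_mono[OF G(1) to_z]
            tendsto_const)
      then have "z - s t e \<in> W"
        using Lim_in_closed_set[OF closed filter_leD[OF G(1) in_W] G(2)] by blast
      then show ?thesis unfolding W'_def by blast
    next
      case False
      then have large: "eventually (\<lambda>x. M < norm (\<kappa> x)) F" for M
        by (simp add: not_frequently not_le)
      then have "filterlim \<kappa> at_infinity F"
        by (auto simp: filterlim_at_infinity[OF order_refl] intro: eventually_mono[OF large] less_imp_le)
      then have "((\<lambda>x. inverse (\<kappa> x)) \<longlongrightarrow> 0) F"
        by (rule filterlim_compose[OF tendsto_inverse_0])
      then have "((\<lambda>x. s (inverse (\<kappa> x)) x - e) \<longlongrightarrow> s 0 z - e) F"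
        by (intro tvs_tendsto_diff[OF tv] tvs_tendsto_scale[OF tv] to_z tendsto_const)
      then have to_minus_e: "((\<lambda>x. s (inverse (\<kappa> x)) x - e) \<longlongrightarrow> - e) F" by simp
      have "eventually (\<lambda>x. s (inverse (\<kappa> x)) x - e \<in> W) F"
        using eventually_conj[OF in_W large[of 0]]
      proof (rule eventually_mono)
        fix x assume x: "x - s (\<kappa> x) e \<in> W \<and> 0 < norm (\<kappa> x)"
        then have "s (inverse (\<kappa> x)) (x - s (\<kappa> x) e) \<in> W"
          using subspace subspace_scale by blast
        then show "s (inverse (\<kappa> x)) x - e \<in> W"
          using x by (simp add: scale_right_diff_distrib)
      qed
      then have "- e \<in> W" by (rule Lim_in_closed_set[OF closed _ \<open>F \<noteq> bot\<close> to_minus_e])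
      then have "e \<in> W" using subspace_neg[OF subspace] by fastforce
      with e show ?thesis by simp
    qed
  qed
  then show ?thesis unfolding W'_def[symmetric] closed_limpt by blast
qed

lemma tvs_closed_span:
  fixes s :: "'k::real_normed_field \<Rightarrow> 'a::{ab_group_add,t2_space} \<Rightarrow> 'a"
  assumes tv: "tvs s" and "finite B"
  shows "closed (module.span s B)"
  using \<open>finite B\<close>
proof (induction rule: finite_induct)
  interpret vector_space s using tvs_vector_space[OF tv] .
  case empty
  show ?case by simp
next
  interpret vector_space s using tvs_vector_space[OF tv] .
  case (insert e B)
  show ?case
  proof (cases "e \<in> span B")
    case True
    then show ?thesis using insert.IH by (simp add: span_redundant)
  next
    case False
    then show ?thesis unfolding span_insert
      by (rule closed_subspace_insert_line[OF tv insert.IH subspace_span])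
  qed
qed

section \<open>The orbit of a hypercyclic vector belongs to Sigma(X)\<close>

text \<open>If Sigma(X) is nonempty, X is infinite-dimensional, so no dense set lies in a
  finite-dimensional (hence closed) subspace.\<close>

lemma dense_set_not_in_finite_span:
  fixes s :: "'k::real_normed_field \<Rightarrow> 'a::{ab_group_add,t2_space} \<Rightarrow> 'a"
  assumes tv: "tvs s" and A: "A \<in> Sigma_set s" and "finite B"
    and dense: "closure S = UNIV" and S: "S \<subseteq> module.span s B"
  shows False
proof -
  interpret vector_space s using tvs_vector_space[OF tv] .
  have "closure S \<subseteq> span B"
    using closure_minimal[OF S tvs_closed_span[OF tv \<open>finite B\<close>]] .
  then have "A \<subseteq> span B" using dense by auto
  moreover have "infinite A" "\<not> dependent A" using A by (auto simp: Sigma_set_def)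
  ultimately show False using independent_span_bound[OF \<open>finite B\<close>] by blast
qed

text \<open>Linear recurrence: once T^m x lies in the span of the earlier iterates, that span
  is T-invariant and therefore contains the whole orbit.\<close>

lemma orbit_in_span_of_first_iterates:
  fixes s :: "'k::field \<Rightarrow> 'a::ab_group_add \<Rightarrow> 'a"
  assumes lin: "Vector_Spaces.linear s s T"
    and recurrence: "(T ^^ m) x \<in> module.span s ((\<lambda>n. (T ^^ n) x) ` {..<m})"
  shows "orbit T x \<subseteq> module.span s ((\<lambda>n. (T ^^ n) x) ` {..<m})"
proof -
  interpret lin: Vector_Spaces.linear s s T by (rule lin)
  define V where "V = lin.vs1.span ((\<lambda>n. (T ^^ n) x) ` {..<m})"
  have iterates: "(T ^^ n) x \<in> V" if "n \<le> m" for n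
    using that recurrence by (cases "n = m") (auto simp: V_def intro: lin.vs1.span_base)
  have "T ((T ^^ n) x) \<in> V" if "n < m" for n
    using iterates[of "Suc n"] that by simp
  then have "T ` ((\<lambda>n. (T ^^ n) x) ` {..<m}) \<subseteq> V" by auto
  then have invariant: "T v \<in> V" if "v \<in> V" for v
    using that lin.vs1.span_minimal[of "T ` _" V] lin.span_image lin.vs1.subspace_span
    unfolding V_def by blast
  have "(T ^^ n) x \<in> V" for n
    by (induction n) (use iterates[of 0] invariant in auto)
  then show ?thesis unfolding orbit_def V_def by auto
qed

text \<open>Conversely, if no iterate lies in the span of the earlier ones, every finite prefix of
  the orbit is independent, hence so is the whole orbit.\<close>

lemma orbit_independent_without_recurrence:
  fixes s :: "'k::field \<Rightarrow> 'a::ab_group_add \<Rightarrow> 'a"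
  assumes vs: "vector_space s"
    and no_recurrence: "\<And>m. (T ^^ m) x \<notin> module.span s ((\<lambda>n. (T ^^ n) x) ` {..<m})"
  shows "\<not> module.dependent s (orbit T x)"
proof
  interpret vector_space s by (rule vs)
  define f where "f n = (T ^^ n) x" for n
  have prefix: "\<not> dependent (f ` {..<N})" for N
  proof (induction N)
    case (Suc N)
    have "f ` {..<Suc N} = insert (f N) (f ` {..<N})" by (simp add: lessThan_Suc)
    then show ?case using Suc.IH no_recurrence[of N] independent_insertI by (simp add: f_def)
  qed (simp add: independent_empty)
  assume "dependent (orbit T x)"
  then obtain t u where t: "finite t" "t \<subseteq> range f" "(\<Sum>v\<in>t. s (u v) v) = 0" "\<exists>v\<in>t. u v \<noteq> 0"
    unfolding orbit_def f_def[symmetric] dependent_explicit by blast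
  obtain I where "finite I" "t = f ` I" using finite_subset_image[OF t(1,2)] by blast
  moreover obtain N where "I \<subseteq> {..<N}" using \<open>finite I\<close> finite_nat_bounded by blast
  ultimately have "t \<subseteq> f ` {..<N}" by blast
  moreover have "dependent t" unfolding dependent_explicit using t by blast
  ultimately show False using prefix dependent_mono by blast
qed

lemma hypercyclic_orbit_in_Sigma:
  fixes s :: "'k::real_normed_field \<Rightarrow> 'a::{ab_group_add,t2_space} \<Rightarrow> 'a"
  assumes tv: "tvs s" and A: "A \<in> Sigma_set s" and T: "T \<in> cont_ops s"
    and dense: "closure (orbit T x) = UNIV"
  shows "orbit T x \<in> Sigma_set s"
proof -
  interpret vector_space s using tvs_vector_space[OF tv] .
  have lin: "Vector_Spaces.linear s s T" using T by (simp add: cont_ops_def)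
  have "infinite (orbit T x)"
    using dense_set_not_in_finite_span[OF tv A _ dense span_superset] by blast
  moreover have "\<not> dependent (orbit T x)"
  proof (cases "\<exists>m. (T ^^ m) x \<in> span ((\<lambda>n. (T ^^ n) x) ` {..<m})")
    case True
    then obtain m where "(T ^^ m) x \<in> span ((\<lambda>n. (T ^^ n) x) ` {..<m})" by blast
    with dense_set_not_in_finite_span[OF tv A _ dense orbit_in_span_of_first_iterates[OF lin]]
    show ?thesis by blast
  next
    case False
    then show ?thesis using orbit_independent_without_recurrence[OF vector_space_axioms] by blast
  qed
  ultimately show ?thesis using dense by (simp add: Sigma_set_def orbit_def)
qed

lemma orbit_conjugate:
  assumes "bij J"
  shows "orbit (J \<circ> T \<circ> inv J) (J x) = J ` orbit T x"
proof -
  have "((J \<circ> T \<circ> inv J) ^^ n) y = J ((T ^^ n) (inv J y))" for n y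
    using assms by (induction n arbitrary: y) (simp_all add: bij_is_inj bij_is_surj surj_f_inv_f)
  then show ?thesis using assms by (auto simp: orbit_def bij_is_inj)
qed

lemma conjugate_cont_ops:
  assumes J: "J \<in> inv_ops s" and T: "T \<in> cont_ops s"
  shows "J \<circ> T \<circ> inv J \<in> cont_ops s"
proof -
  have J: "Vector_Spaces.linear s s J" "continuous_on UNIV J"
      "Vector_Spaces.linear s s (inv J)" "continuous_on UNIV (inv J)"
    using J by (auto simp: inv_ops_def cont_ops_def)
  have T: "Vector_Spaces.linear s s T" "continuous_on UNIV T"
    using T by (auto simp: cont_ops_def)
  have "Vector_Spaces.linear s s (J \<circ> T \<circ> inv J)"
    using Vector_Spaces.linear_compose[OF J(3) Vector_Spaces.linear_compose[OF T(1) J(1)]]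
    by (simp add: comp_assoc)
  moreover have "continuous_on UNIV (J \<circ> T \<circ> inv J)"
    by (intro continuous_on_compose continuous_on_subset[OF J(2)] continuous_on_subset[OF T(2)] J(4)) auto
  ultimately show ?thesis by (simp add: cont_ops_def)
qed

theorem lemma1p2:
  fixes smult_op :: "'k::real_normed_field \<Rightarrow> 'a::{ab_group_add,t2_space} \<Rightarrow> 'a"
  assumes "G_space smult_op"
    and "\<exists>T0\<in>cont_ops smult_op. hypercyclic T0"
  shows "\<forall>A\<in>Sigma_set smult_op. \<exists>T\<in>cont_ops smult_op. \<exists>x. A = orbit T x"
proof
  fix A assume A: "A \<in> Sigma_set smult_op"
  have tv: "tvs smult_op" using assms(1) by (simp add: G_space_def locally_convex_def)
  obtain T0 x where T0: "T0 \<in> cont_ops smult_op" and dense: "closure (orbit T0 x) = UNIV"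
    using assms(2) by (auto simp: hypercyclic_def)
  have "orbit T0 x \<in> Sigma_set smult_op"
    by (rule hypercyclic_orbit_in_Sigma[OF tv A T0 dense])
  then obtain J where J: "J \<in> inv_ops smult_op" and "J ` orbit T0 x = A"
    using assms(1) A unfolding G_space_def by blast
  then have "A = orbit (J \<circ> T0 \<circ> inv J) (J x)"
    using orbit_conjugate[of J T0 x] by (simp add: inv_ops_def)
  with conjugate_cont_ops[OF J T0] show "\<exists>T\<in>cont_ops smult_op. \<exists>x. A = orbit T x" by blast
qed

end
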